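(* Let $G$, $w$, $\nu$ be as in the context, and let $\mathcal{S}=(S_m)_{m=0,\ldots,n}$ be a partition of $V(G)$ with $K_m(\mathcal{S})>0$ for all $m=0,\ldots,n-1$. Then for all $1\le p<\infty$ and all $f\in\ell^p_\nu(G)$ with $f|_{S_0}=0$, \[ \|f|_{V(G)\setminus S_0}\|_{p,\nu}\le\delta_{\mathcal{S},p}\|\nabla_w f\|_p, \] and for all bounded $f$ with $f|_{S_0}=0$, \[ \|f|_{V(G)\setminus S_0}\|_\infty\le n\,\|\nabla_w f\|_\infty. \]
   Context: $G$ is an undirected weighted graph: $V(G)$ is a (countable) vertex set and $w:V(G)\times V(G)\to[0,\infty)$ is symmetric with $w(u,u)=0$; edges are pairs with $w(u,v)\neq0$. $\nu:V(G)\to(0,\infty)$ is a fixed vertex weight; $\ell^p_\nu(G)$, $\|f\|_{p,\nu}=\left(\sum_v|f(v)|^p\nu(v)\right)^{1/p}$, $\|f|_A\|_{p,\nu}$ the same sum over $v\in A$; $\|f|_A\|_\infty=\sup_{v\in A}|f(v)|$. $\|\nabla_w f\|_p=\left(\sum_{u,v\in V(G)}|f(u)-f(v)|^pw(u,v)\right)^{1/p}$ for $p<\infty$, and $\|\nabla_w f\|_\infty=\sup\{|f(u)-f(v)|: w(u,v)>0\}$. $w_A(v)=\sum_{u\in A}w(u,v)$. $D_m=\sup_{v\in S_m}\frac{w_{S_{m+1}}(v)}{\nu(v)}$, $K_m=\inf_{v\in S_{m+1}}\frac{w_{S_m}(v)}{\nu(v)}$, and $\delta_{\mathcal{S},p}=\max_{k=1,\ldots,n}\left(\frac{1}{K_{k-1}}\sum_{m=k}^n\prod_{i=k}^{m-1}\frac{D_i}{K_i}\right)$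 for $p=1$, $\delta_{\mathcal{S},p}=\left(\sum_{m=1}^n\left(\sum_{k=1}^mK_{k-1}^{-q/p}\left(\prod_{i=k}^{m-1}\frac{D_i}{K_i}\right)^{q/p}\right)^{p/q}\right)^{1/p}$ for $1<p<\infty$, $1/p+1/q=1$. Empty products equal $1$, empty sums equal $0$. *)

theory Defs
  imports "HOL-Analysis.Analysis"
begin

text \<open>Quantities that may be infinite are valued in ennreal = [0,\<infinity>].
  Real powers on [0,\<infinity>] for positive exponents: \<infinity> powr r = \<infinity>.\<close>
definition epowr :: "ennreal \<Rightarrow> real \<Rightarrow> ennreal" where
  "epowr x r = (if x = top then top else ennreal (enn2real x powr r))"

definition wA :: "('v \<Rightarrow> 'v \<Rightarrow> real) \<Rightarrow> 'v set \<Rightarrow> 'v \<Rightarrow> ennreal" where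
  "wA w A v = (\<Sum>\<^sub>\<infinity> u\<in>A. ennreal (w u v))"

definition Dm :: "('v \<Rightarrow> 'v \<Rightarrow> real) \<Rightarrow> ('v \<Rightarrow> real) \<Rightarrow> (nat \<Rightarrow> 'v set) \<Rightarrow> nat \<Rightarrow> ennreal" where
  "Dm w \<nu> S m = (SUP v\<in>S m. wA w (S (Suc m)) v / ennreal (\<nu> v))"

definition Km :: "('v \<Rightarrow> 'v \<Rightarrow> real) \<Rightarrow> ('v \<Rightarrow> real) \<Rightarrow> (nat \<Rightarrow> 'v set) \<Rightarrow> nat \<Rightarrow> ennreal" where
  "Km w \<nu> S m = (INF v\<in>S (Suc m). wA w (S m) v / ennreal (\<nu> v))"

definition delta :: "('v \<Rightarrow> 'v \<Rightarrow> real) \<Rightarrow> ('v \<Rightarrow> real) \<Rightarrow> (nat \<Rightarrow> 'v set) \<Rightarrow> nat \<Rightarrow> real \<Rightarrow> ennreal" where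
  "delta w \<nu> S n p =
    (let D = Dm w \<nu> S; K = Km w \<nu> S in
     if p = 1 then
       (SUP k\<in>{1..n}. (1 / K (k - 1)) * (\<Sum>m=k..n. \<Prod>i=k..<m. D i / K i))
     else
       (let q = p / (p - 1) in
        epowr (\<Sum>m=1..n. epowr (\<Sum>k=1..m. epowr (1 / K (k - 1)) (q / p)
                                     * epowr (\<Prod>i=k..<m. D i / K i) (q / p)) (p / q)) (1 / p)))"

definition pnorm :: "('v \<Rightarrow> real) \<Rightarrow> real \<Rightarrow> 'v set \<Rightarrow> ('v \<Rightarrow> real) \<Rightarrow> ennreal" where
  "pnorm \<nu> p A f = epowr (\<Sum>\<^sub>\<infinity> v\<in>A. ennreal (\<bar>f v\<bar> powr p * \<nu> v)) (1 / p)"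

definition grad_pnorm :: "('v \<Rightarrow> 'v \<Rightarrow> real) \<Rightarrow> real \<Rightarrow> ('v \<Rightarrow> real) \<Rightarrow> ennreal" where
  "grad_pnorm w p f = epowr (\<Sum>\<^sub>\<infinity> (u,v)\<in>UNIV. ennreal (\<bar>f u - f v\<bar> powr p * w u v)) (1 / p)"

definition sup_norm :: "'v set \<Rightarrow> ('v \<Rightarrow> real) \<Rightarrow> ennreal" where
  "sup_norm A f = (SUP v\<in>A. ennreal \<bar>f v\<bar>)"

definition grad_sup_norm :: "('v \<Rightarrow> 'v \<Rightarrow> real) \<Rightarrow> ('v \<Rightarrow> real) \<Rightarrow> ennreal" where
  "grad_sup_norm w f = (SUP (u,v)\<in>{(u,v). w u v > 0}. ennreal \<bar>f u - f v\<bar>)"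

end

theory Submission
  imports Defs
begin

text \<open>
  Write \<Phi> m for the p-norm of f on S m and g k for the p-norm of the gradient of f on the edges
  between S (k - 1) and S k. Along an edge (u, v) from S m to S (m + 1) we have
  |f v| \<le> |f u - f v| + |f u|; summing p-th powers with weights w u v, bounding the left side
  from below via K m and the right side from above via D m, Minkowski's inequality gives
  K m powr (1/p) * \<Phi> (m + 1) \<le> g (m + 1) + D m powr (1/p) * \<Phi> m.
  As \<Phi> 0 = 0, this linear recursion unrolls to a triangular bound of \<Phi> m by g 1, ..., g m.
  Summing over m (for p = 1), or Hoelder's inequality in each row (for p > 1), turns it into the
  bound by \<delta> times the full gradient norm, since the edge sets S (k - 1) \<times> S k are disjoint.
  For the supremum norm, K (m - 1) > 0 gives every vertex of S m a neighbour in S (m - 1), so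
  |f| \<le> m * sup |\<nabla>f| on S m by induction.
\<close>

section \<open>Sums over countable sets as integrals\<close>

lemma infsum_ennreal_eq_suminf:
  fixes h :: "nat \<Rightarrow> ennreal"
  shows "infsum h UNIV = suminf h"
proof -
  have "h summable_on UNIV"
    by (simp add: nonneg_summable_on_complete)
  then show ?thesis
    by (metis has_sum_imp_sums has_sum_infsum sums_unique)
qed

lemma infsum_ennreal_eq_nn_integral:
  fixes h :: "'a::countable \<Rightarrow> ennreal"
  shows "infsum h A = (\<integral>\<^sup>+x. indicator A x * h x \<partial>count_space UNIV)"
proof -
  let ?g = "\<lambda>x. indicator A x * h x"
  have "infsum h A = infsum ?g UNIV"
    by (rule infsum_cong_neutral) (auto simp: indicator_def)
  also have "\<dots> = (\<integral>\<^sup>+x. ?g x \<partial>count_space UNIV)"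
  proof (cases "finite (UNIV :: 'a set)")
    case True
    then show ?thesis by (simp add: nn_integral_count_space_finite)
  next
    case False
    then have bij: "bij_betw (from_nat_into (UNIV :: 'a set)) UNIV UNIV"
      by (intro bij_betw_from_nat_into) auto
    have "infsum ?g UNIV = infsum (\<lambda>i. ?g (from_nat_into UNIV i)) UNIV"
      by (rule infsum_reindex_bij_betw[OF bij, symmetric])
    also have "\<dots> = (\<integral>\<^sup>+i. ?g (from_nat_into UNIV i) \<partial>count_space UNIV)"
      by (simp only: infsum_ennreal_eq_suminf nn_integral_count_space_nat)
    also have "\<dots> = (\<integral>\<^sup>+x. ?g x \<partial>count_space UNIV)"
      by (rule nn_integral_bij_count_space[OF bij])
    finally show ?thesis .
  qed
  finally show ?thesis .
qed

section \<open>Real powers on [0,\<infinity>]\<close>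

lemma epowr_ennreal: "0 \<le> a \<Longrightarrow> epowr (ennreal a) t = ennreal (a powr t)"
  by (simp add: epowr_def)

lemma epowr_top [simp]: "epowr top t = top"
  by (simp add: epowr_def)

lemma epowr_0 [simp]: "epowr 0 t = 0"
  by (simp add: epowr_def)

lemma epowr_1 [simp]: "epowr 1 t = 1"
  by (simp add: epowr_def)

lemma epowr_1_right [simp]: "epowr x 1 = x"
  by (cases x rule: ennreal_cases) (auto simp: epowr_def)

lemma epowr_eq_0_iff: "t > 0 \<Longrightarrow> epowr x t = 0 \<longleftrightarrow> x = 0"
  by (cases x rule: ennreal_cases) (auto simp: epowr_def)

lemma epowr_eq_top_iff: "epowr x t = top \<longleftrightarrow> x = top"
  by (cases x rule: ennreal_cases) (auto simp: epowr_def)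

lemma epowr_epowr: "epowr (epowr x s) t = epowr x (s * t)"
  by (cases x rule: ennreal_cases) (auto simp: epowr_def powr_powr)

lemma epowr_mono: "t > 0 \<Longrightarrow> x \<le> y \<Longrightarrow> epowr x t \<le> epowr y t"
  by (cases x rule: ennreal_cases; cases y rule: ennreal_cases)
     (auto simp: epowr_def powr_mono2 top_unique)

lemma epowr_mult:
  assumes "t > 0"
  shows "epowr (x * y) t = epowr x t * epowr y t"
proof (cases "x = top \<or> y = top")
  case True
  then show ?thesis
    using assms by (auto simp: epowr_eq_0_iff ennreal_mult_top ennreal_top_mult)
next
  case False
  then obtain a b where "x = ennreal a" "y = ennreal b" "0 \<le> a" "0 \<le> b"
    by (metis ennreal_cases)
  then show ?thesis
    by (simp add: epowr_def ennreal_mult[symmetric] powr_mult)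
qed

lemma epowr_prod: "t > 0 \<Longrightarrow> epowr (\<Prod>i\<in>I. x i) t = (\<Prod>i\<in>I. epowr (x i) t)"
  by (induction I rule: infinite_finite_induct) (simp_all add: epowr_mult)

section \<open>Hoelder and Minkowski inequalities\<close>

lemma Holder_inequality_sum:
  fixes x y :: "'i \<Rightarrow> real"
  assumes "finite I" and pq: "p > 1" "q > 1" "1/p + 1/q = 1"
    and nonneg: "\<And>k. k \<in> I \<Longrightarrow> 0 \<le> x k" "\<And>k. k \<in> I \<Longrightarrow> 0 \<le> y k"
  shows "(\<Sum>k\<in>I. x k * y k)
    \<le> (\<Sum>k\<in>I. x k powr q) powr (1/q) * (\<Sum>k\<in>I. y k powr p) powr (1/p)"
proof -
  define X where "X = (\<Sum>k\<in>I. x k powr q) powr (1/q)"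
  define Y where "Y = (\<Sum>k\<in>I. y k powr p) powr (1/p)"
  show ?thesis
  proof (cases "X = 0 \<or> Y = 0")
    case True
    then have "(\<forall>k\<in>I. x k = 0) \<or> (\<forall>k\<in>I. y k = 0)"
      using \<open>finite I\<close> nonneg unfolding X_def Y_def by (auto simp: sum_nonneg_eq_0_iff)
    then show ?thesis
      by auto
  next
    case False
    then have XY: "X > 0" "Y > 0"
      unfolding X_def Y_def by auto
    have Xq: "X powr q = (\<Sum>k\<in>I. x k powr q)" and Yp: "Y powr p = (\<Sum>k\<in>I. y k powr p)"
      using pq unfolding X_def Y_def by (auto simp: powr_powr sum_nonneg)
    have "(\<Sum>k\<in>I. (x k / X) * (y k / Y)) \<le> (\<Sum>k\<in>I. (x k / X) powr q / q + (y k / Y) powr p / p)"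
      using Youngs_inequality[of q p "x _ / X" "y _ / Y"] pq nonneg XY
      by (intro sum_mono) (auto simp: add.commute)
    also have "\<dots> = (\<Sum>k\<in>I. x k powr q) / X powr q / q + (\<Sum>k\<in>I. y k powr p) / Y powr p / p"
      using nonneg XY by (simp add: sum.distrib powr_divide sum_divide_distrib)
    also have "\<dots> = 1"
      unfolding Xq[symmetric] Yp[symmetric] using XY pq by simp
    finally show ?thesis
      using XY unfolding X_def[symmetric] Y_def[symmetric]
      by (simp add: sum_divide_distrib[symmetric] divide_le_eq)
  qed
qed

lemma Holder_inequality_sum_ennreal:
  fixes x y :: "'i \<Rightarrow> ennreal"
  assumes "finite I" and pq: "p > 1" "q > 1" "1/p + 1/q = 1"
  shows "(\<Sum>k\<in>I. x k * y k)
    \<le> epowr (\<Sum>k\<in>I. epowr (x k) q) (1/q) * epowr (\<Sum>k\<in>I. epowr (y k) p) (1/p)"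
proof (cases "(\<forall>k\<in>I. x k \<noteq> top) \<and> (\<forall>k\<in>I. y k \<noteq> top)")
  case True
  define a where "a k = enn2real (x k)" for k
  define b where "b k = enn2real (y k)" for k
  have ab: "x k = ennreal (a k)" "y k = ennreal (b k)" if "k \<in> I" for k
    using True that unfolding a_def b_def by (metis ennreal_enn2real less_top)+
  have nonneg: "0 \<le> a k" "0 \<le> b k" for k
    by (simp_all add: a_def b_def)
  have "(\<Sum>k\<in>I. x k * y k) = (\<Sum>k\<in>I. ennreal (a k * b k))"
    by (rule sum.cong) (simp_all add: ab nonneg ennreal_mult)
  also have "\<dots> = ennreal (\<Sum>k\<in>I. a k * b k)"
    by (rule sum_ennreal) (simp add: nonneg)
  also have "\<dots> \<le> ennreal ((\<Sum>k\<in>I. a k powr q) powr (1/q) * (\<Sum>k\<in>I. b k powr p) powr (1/p))"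
    using assms nonneg by (intro ennreal_leI Holder_inequality_sum) auto
  also have "\<dots> = epowr (\<Sum>k\<in>I. epowr (x k) q) (1/q) * epowr (\<Sum>k\<in>I. epowr (y k) p) (1/p)"
  proof -
    have "(\<Sum>k\<in>I. epowr (x k) q) = ennreal (\<Sum>k\<in>I. a k powr q)"
      "(\<Sum>k\<in>I. epowr (y k) p) = ennreal (\<Sum>k\<in>I. b k powr p)"
      by (simp_all add: ab nonneg epowr_ennreal flip: sum_ennreal cong: sum.cong)
    then show ?thesis
      by (simp add: epowr_ennreal sum_nonneg ennreal_mult)
  qed
  finally show ?thesis .
next
  case False
  show ?thesis
  proof (cases "(\<forall>k\<in>I. x k = 0) \<or> (\<forall>k\<in>I. y k = 0)")
    case True
    then show ?thesis by auto
  next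
    case nonzero: False
    have "0 < 1/p" "0 < 1/q"
      using pq by auto
    then have "epowr (\<Sum>k\<in>I. epowr (x k) q) (1/q) * epowr (\<Sum>k\<in>I. epowr (y k) p) (1/p) = top"
      using False nonzero \<open>finite I\<close> pq
      by (auto simp: epowr_eq_0_iff epowr_eq_top_iff ennreal_mult_eq_top_iff)
    then show ?thesis by simp
  qed
qed

lemma powr_add_le_weighted:
  fixes a b s t p :: real
  assumes ab: "0 \<le> a" "0 \<le> b" and st: "0 < s" "0 < t" and p: "1 \<le> p"
  shows "(a + b) powr p \<le> (s + t) powr (p - 1) * (s powr (1 - p) * a powr p + t powr (1 - p) * b powr p)"
proof -
  define l where "l = s / (s + t)"
  have l: "0 < l" "l < 1"
    using st by (auto simp: l_def field_simps)
  have one_minus_l: "1 - l = t / (s + t)"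
    using st by (simp add: l_def field_simps)
  have weight: "(s + t) powr (p - 1) * r powr (1 - p) = (r / (s + t)) powr (1 - p)" if "0 < r" for r
    using st that by (simp add: powr_divide powr_minus_divide[symmetric] powr_diff divide_simps)
  have "1 \<le> r powr (1 - p)" if "0 < r" "r < 1" for r
  proof -
    have "1 \<le> (1 / r) powr (p - 1)"
      using that p by (intro ge_one_powr_ge_zero) auto
    also have "\<dots> = r powr (1 - p)"
      using that by (simp add: powr_divide powr_diff)
    finally show ?thesis .
  qed
  then have ge1: "1 \<le> l powr (1 - p)" "1 \<le> (1 - l) powr (1 - p)"
    using l by auto
  have "(a + b) powr p \<le> l powr (1 - p) * a powr p + (1 - l) powr (1 - p) * b powr p"
  proof (cases "a = 0 \<or> b = 0")
    case True
    with ge1 ab show ?thesis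
      by (auto intro: order_trans[OF _ mult_right_mono] simp: mult_le_cancel_right1)
  next
    case False
    with ab have "0 < a" "0 < b" by auto
    have "((1 - (1 - l)) *\<^sub>R (a / l) + (1 - l) *\<^sub>R (b / (1 - l))) powr p
        \<le> (1 - (1 - l)) * (a / l) powr p + (1 - l) * (b / (1 - l)) powr p"
      using \<open>0 < a\<close> \<open>0 < b\<close> l st by (intro convex_onD[OF powr_convex[OF p]]) auto
    moreover have "r * (c / r) powr p = r powr (1 - p) * c powr p" if "0 < r" "0 < c" for r c
      using that by (simp add: powr_divide powr_diff)
    ultimately show ?thesis
      using l \<open>0 < a\<close> \<open>0 < b\<close> by simp
  qed
  then show ?thesis
    using st unfolding one_minus_l by (simp add: distrib_left weight mult.assoc[symmetric] l_def)
qed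

lemma Minkowski_weighted_sum:
  fixes c :: "'a \<Rightarrow> ennreal" and \<alpha> \<beta> :: "'a \<Rightarrow> real"
  assumes p: "1 \<le> p" and nonneg: "\<And>x. 0 \<le> \<alpha> x" "\<And>x. 0 \<le> \<beta> x"
  shows "epowr (\<integral>\<^sup>+x. c x * ennreal ((\<alpha> x + \<beta> x) powr p) \<partial>count_space UNIV) (1/p)
      \<le> epowr (\<integral>\<^sup>+x. c x * ennreal (\<alpha> x powr p) \<partial>count_space UNIV) (1/p)
       + epowr (\<integral>\<^sup>+x. c x * ennreal (\<beta> x powr p) \<partial>count_space UNIV) (1/p)"
    (is "epowr ?L _ \<le> epowr ?A _ + epowr ?B _")
proof -
  have drop_zero: "(\<integral>\<^sup>+x. c x * ennreal ((\<gamma> x + \<delta> x) powr p) \<partial>count_space UNIV)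
    = (\<integral>\<^sup>+x. c x * ennreal (\<delta> x powr p) \<partial>count_space UNIV)"
    if "\<And>x. 0 \<le> \<gamma> x" and "(\<integral>\<^sup>+x. c x * ennreal (\<gamma> x powr p) \<partial>count_space UNIV) = 0"
    for \<gamma> \<delta> :: "'a \<Rightarrow> real"
  proof -
    have "c x = 0 \<or> \<gamma> x = 0" for x
      using that by (auto simp: nn_integral_0_iff_AE AE_count_space ennreal_eq_0_iff dest!: spec[of _ x])
    then show ?thesis
      by (intro nn_integral_cong) (metis add_0 mult_zero_left)
  qed
  consider "?A = 0 \<or> ?B = 0" | "?A = top \<or> ?B = top" | "?A \<noteq> 0" "?A \<noteq> top" "?B \<noteq> 0" "?B \<noteq> top"
    by blast
  then show ?thesis
  proof cases
    case 1
    then show ?thesis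
      using drop_zero[of \<alpha> \<beta>] drop_zero[of \<beta> \<alpha>] nonneg by (auto simp: add.commute)
  next
    case 2
    then show ?thesis by auto
  next
    case 3
    define a where "a = enn2real ?A"
    define b where "b = enn2real ?B"
    have ab: "?A = ennreal a" "?B = ennreal b" "0 < a" "0 < b"
      using 3 unfolding a_def b_def by (simp_all add: enn2real_positive_iff less_top[symmetric] zero_less_iff_neq_zero)
    define sa where "sa = a powr (1/p)"
    define sb where "sb = b powr (1/p)"
    define \<kappa> where "\<kappa> = (sa + sb) powr (p - 1)"
    \<comment> \<open>powr_add_le_weighted with s, t the two norms integrates to (s + t) powr p\<close>
    have s_pos: "0 < sa" "0 < sb" and s_pow: "sa powr p = a" "sb powr p = b"
      using ab p by (auto simp: sa_def sb_def powr_powr)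
    have "?L \<le> (\<integral>\<^sup>+x. ennreal (\<kappa> * sa powr (1 - p)) * (c x * ennreal (\<alpha> x powr p))
        + ennreal (\<kappa> * sb powr (1 - p)) * (c x * ennreal (\<beta> x powr p)) \<partial>count_space UNIV)"
    proof (rule nn_integral_mono)
      fix x
      have "ennreal ((\<alpha> x + \<beta> x) powr p)
          \<le> ennreal (\<kappa> * sa powr (1 - p) * \<alpha> x powr p + \<kappa> * sb powr (1 - p) * \<beta> x powr p)"
        using powr_add_le_weighted[OF nonneg(1,2)[of x] s_pos p]
        by (intro ennreal_leI) (simp add: \<kappa>_def algebra_simps)
      also have "\<dots> = ennreal (\<kappa> * sa powr (1 - p)) * ennreal (\<alpha> x powr p)
          + ennreal (\<kappa> * sb powr (1 - p)) * ennreal (\<beta> x powr p)"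
        by (simp add: \<kappa>_def ennreal_plus ennreal_mult)
      finally show "c x * ennreal ((\<alpha> x + \<beta> x) powr p)
          \<le> ennreal (\<kappa> * sa powr (1 - p)) * (c x * ennreal (\<alpha> x powr p))
            + ennreal (\<kappa> * sb powr (1 - p)) * (c x * ennreal (\<beta> x powr p))"
        by (rule mult_left_mono[THEN order_trans]) (simp_all add: algebra_simps)
    qed
    also have "\<dots> = ennreal (\<kappa> * sa powr (1 - p)) * ?A + ennreal (\<kappa> * sb powr (1 - p)) * ?B"
      by (simp add: nn_integral_add nn_integral_cmult)
    also have "\<dots> = ennreal (\<kappa> * (sa powr (1 - p) * a + sb powr (1 - p) * b))"
      using ab by (simp add: \<kappa>_def ennreal_mult[symmetric] ennreal_plus distrib_left mult.assoc)
    also have "sa powr (1 - p) * a + sb powr (1 - p) * b = sa + sb"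
      using s_pos by (simp add: s_pow[symmetric] powr_add[symmetric])
    also have "\<kappa> * (sa + sb) = (sa + sb) powr p"
      using s_pos by (simp add: \<kappa>_def powr_diff)
    finally have "epowr ?L (1/p) \<le> epowr (ennreal ((sa + sb) powr p)) (1/p)"
      using p by (intro epowr_mono) auto
    also have "\<dots> = epowr ?A (1/p) + epowr ?B (1/p)"
      using s_pos p ab by (simp add: epowr_ennreal powr_powr sa_def sb_def ennreal_plus)
    finally show ?thesis .
  qed
qed

section \<open>Estimates between consecutive layers\<close>

definition pnorm_pow :: "('v \<Rightarrow> real) \<Rightarrow> real \<Rightarrow> 'v set \<Rightarrow> ('v \<Rightarrow> real) \<Rightarrow> ennreal" where
  "pnorm_pow \<nu> p A f = (\<integral>\<^sup>+v. indicator A v * ennreal (\<bar>f v\<bar> powr p * \<nu> v) \<partial>count_space UNIV)"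

definition edge_sum ::
    "('v \<Rightarrow> 'v \<Rightarrow> real) \<Rightarrow> 'v set \<Rightarrow> 'v set \<Rightarrow> ('v \<Rightarrow> 'v \<Rightarrow> real) \<Rightarrow> ennreal" where
  "edge_sum w A B h = (\<integral>\<^sup>+e. indicator A (fst e) * indicator B (snd e) * ennreal (w (fst e) (snd e))
      * ennreal (h (fst e) (snd e)) \<partial>count_space UNIV)"

abbreviation grad_pnorm_pow ::
    "('v \<Rightarrow> 'v \<Rightarrow> real) \<Rightarrow> real \<Rightarrow> 'v set \<Rightarrow> 'v set \<Rightarrow> ('v \<Rightarrow> real) \<Rightarrow> ennreal" where
  "grad_pnorm_pow w p A B f \<equiv> edge_sum w A B (\<lambda>u v. \<bar>f u - f v\<bar> powr p)"

lemma pnorm_eq_epowr_pnorm_pow: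
  fixes \<nu> :: "'v::countable \<Rightarrow> real"
  shows "pnorm \<nu> p A f = epowr (pnorm_pow \<nu> p A f) (1/p)"
  by (simp add: pnorm_def pnorm_pow_def infsum_ennreal_eq_nn_integral)

lemma grad_pnorm_eq_epowr_grad_pnorm_pow:
  fixes w :: "'v::countable \<Rightarrow> 'v \<Rightarrow> real"
  assumes "\<And>u v. 0 \<le> w u v"
  shows "grad_pnorm w p f = epowr (grad_pnorm_pow w p UNIV UNIV f) (1/p)"
proof -
  have "(\<Sum>\<^sub>\<infinity>(u, v)\<in>UNIV. ennreal (\<bar>f u - f v\<bar> powr p * w u v)) = grad_pnorm_pow w p UNIV UNIV f"
    unfolding edge_sum_def infsum_ennreal_eq_nn_integral
    by (intro nn_integral_cong) (auto simp: assms ennreal_mult mult.commute)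
  then show ?thesis
    by (simp add: grad_pnorm_def)
qed

lemma wA_eq_nn_integral:
  fixes w :: "'v::countable \<Rightarrow> 'v \<Rightarrow> real"
  shows "wA w A v = (\<integral>\<^sup>+u. indicator A u * ennreal (w u v) \<partial>count_space UNIV)"
  unfolding wA_def by (rule infsum_ennreal_eq_nn_integral)

lemma ennreal_divide_mult_cancel: "0 < c \<Longrightarrow> x / ennreal c * ennreal c = x"
  by (simp add: ennreal_divide_times)

lemma Km_mult_le_wA:
  assumes "0 < \<nu> v" and "v \<in> S (Suc m)"
  shows "Km w \<nu> S m * ennreal (\<nu> v) \<le> wA w (S m) v"
proof -
  have "Km w \<nu> S m * ennreal (\<nu> v) \<le> wA w (S m) v / ennreal (\<nu> v) * ennreal (\<nu> v)"
    unfolding Km_def using assms(2) by (intro mult_right_mono INF_lower) simp_all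
  then show ?thesis
    using assms(1) by (simp add: ennreal_divide_mult_cancel)
qed

lemma wA_le_Dm_mult:
  assumes "0 < \<nu> u" and "u \<in> S m"
  shows "wA w (S (Suc m)) u \<le> Dm w \<nu> S m * ennreal (\<nu> u)"
proof -
  have "wA w (S (Suc m)) u / ennreal (\<nu> u) * ennreal (\<nu> u) \<le> Dm w \<nu> S m * ennreal (\<nu> u)"
    unfolding Dm_def using assms(2) by (intro mult_right_mono SUP_upper) simp_all
  then show ?thesis
    using assms(1) by (simp add: ennreal_divide_mult_cancel)
qed

lemma Km_mult_pnorm_pow_le_edge_sum:
  fixes w :: "'v::countable \<Rightarrow> 'v \<Rightarrow> real"
  assumes \<nu>_pos: "\<And>v. 0 < \<nu> v"
  shows "Km w \<nu> S m * pnorm_pow \<nu> p (S (Suc m)) f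
    \<le> edge_sum w (S m) (S (Suc m)) (\<lambda>u v. \<bar>f v\<bar> powr p)"
proof -
  let ?A = "S m" and ?B = "S (Suc m)" and ?K = "Km w \<nu> S m"
  have "?K * pnorm_pow \<nu> p ?B f
      = (\<integral>\<^sup>+v. ?K * (indicator ?B v * ennreal (\<bar>f v\<bar> powr p * \<nu> v)) \<partial>count_space UNIV)"
    unfolding pnorm_pow_def by (rule nn_integral_cmult[symmetric]) simp
  also have "\<dots> \<le> (\<integral>\<^sup>+v. \<integral>\<^sup>+u. indicator ?A u * indicator ?B v * ennreal (w u v)
      * ennreal (\<bar>f v\<bar> powr p) \<partial>count_space UNIV \<partial>count_space UNIV)"
  proof (rule nn_integral_mono)
    fix v
    show "?K * (indicator ?B v * ennreal (\<bar>f v\<bar> powr p * \<nu> v))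
      \<le> (\<integral>\<^sup>+u. indicator ?A u * indicator ?B v * ennreal (w u v)
        * ennreal (\<bar>f v\<bar> powr p) \<partial>count_space UNIV)"
    proof (cases "v \<in> ?B")
      case True
      have "?K * (indicator ?B v * ennreal (\<bar>f v\<bar> powr p * \<nu> v))
          = ?K * ennreal (\<nu> v) * ennreal (\<bar>f v\<bar> powr p)"
        using True \<nu>_pos[of v] by (simp add: ennreal_mult mult.commute mult.left_commute)
      also have "\<dots> \<le> wA w ?A v * ennreal (\<bar>f v\<bar> powr p)"
        using Km_mult_le_wA[where \<nu> = \<nu> and S = S, OF \<nu>_pos True] by (rule mult_right_mono) simp
      also have "\<dots> = (\<integral>\<^sup>+u. indicator ?A u * indicator ?B v * ennreal (w u v)
          * ennreal (\<bar>f v\<bar> powr p) \<partial>count_space UNIV)"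
        using True unfolding wA_eq_nn_integral by (simp add: nn_integral_multc)
      finally show ?thesis .
    qed simp
  qed
  also have "\<dots> = edge_sum w ?A ?B (\<lambda>u v. \<bar>f v\<bar> powr p)"
    unfolding edge_sum_def
    using nn_integral_snd_count_space[of "\<lambda>e. indicator ?A (fst e) * indicator ?B (snd e)
        * ennreal (w (fst e) (snd e)) * ennreal (\<bar>f (snd e)\<bar> powr p)"]
    by simp
  finally show ?thesis .
qed

lemma edge_sum_le_Dm_mult_pnorm_pow:
  fixes w :: "'v::countable \<Rightarrow> 'v \<Rightarrow> real"
  assumes w_sym: "\<And>u v. w u v = w v u" and \<nu>_pos: "\<And>v. 0 < \<nu> v"
  shows "edge_sum w (S m) (S (Suc m)) (\<lambda>u v. \<bar>f u\<bar> powr p)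
    \<le> Dm w \<nu> S m * pnorm_pow \<nu> p (S m) f"
proof -
  let ?A = "S m" and ?B = "S (Suc m)" and ?D = "Dm w \<nu> S m"
  have "edge_sum w ?A ?B (\<lambda>u v. \<bar>f u\<bar> powr p)
      = (\<integral>\<^sup>+u. \<integral>\<^sup>+v. indicator ?A u * indicator ?B v * ennreal (w u v)
        * ennreal (\<bar>f u\<bar> powr p) \<partial>count_space UNIV \<partial>count_space UNIV)"
    unfolding edge_sum_def
    using nn_integral_fst_count_space[of "\<lambda>e. indicator ?A (fst e) * indicator ?B (snd e)
        * ennreal (w (fst e) (snd e)) * ennreal (\<bar>f (fst e)\<bar> powr p)"]
    by simp
  also have "\<dots> \<le> (\<integral>\<^sup>+u. ?D * (indicator ?A u * ennreal (\<bar>f u\<bar> powr p * \<nu> u)) \<partial>count_space UNIV)"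
  proof (rule nn_integral_mono)
    fix u
    show "(\<integral>\<^sup>+v. indicator ?A u * indicator ?B v * ennreal (w u v)
        * ennreal (\<bar>f u\<bar> powr p) \<partial>count_space UNIV)
      \<le> ?D * (indicator ?A u * ennreal (\<bar>f u\<bar> powr p * \<nu> u))"
    proof (cases "u \<in> ?A")
      case True
      have "(\<integral>\<^sup>+v. indicator ?A u * indicator ?B v * ennreal (w u v)
          * ennreal (\<bar>f u\<bar> powr p) \<partial>count_space UNIV) = wA w ?B u * ennreal (\<bar>f u\<bar> powr p)"
        using True unfolding wA_eq_nn_integral
        by (simp add: nn_integral_multc w_sym[of u])
      also have "\<dots> \<le> ?D * ennreal (\<nu> u) * ennreal (\<bar>f u\<bar> powr p)"
        using wA_le_Dm_mult[where \<nu> = \<nu> and S = S, OF \<nu>_pos True] by (rule mult_right_mono) simp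
      also have "\<dots> = ?D * (indicator ?A u * ennreal (\<bar>f u\<bar> powr p * \<nu> u))"
        using True \<nu>_pos[of u] by (simp add: ennreal_mult mult.commute mult.left_commute)
      finally show ?thesis .
    qed simp
  qed
  also have "\<dots> = ?D * pnorm_pow \<nu> p ?A f"
    unfolding pnorm_pow_def by (rule nn_integral_cmult) simp
  finally show ?thesis .
qed

lemma edge_sum_mono:
  "(\<And>u v. h u v \<le> h' u v) \<Longrightarrow> edge_sum w A B h \<le> edge_sum w A B h'"
  unfolding edge_sum_def by (intro nn_integral_mono mult_left_mono ennreal_leI) auto

lemma next_layer_pnorm_le:
  fixes w :: "'v::countable \<Rightarrow> 'v \<Rightarrow> real"
  assumes w_nonneg: "\<And>u v. 0 \<le> w u v" and w_sym: "\<And>u v. w u v = w v u"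
    and \<nu>_pos: "\<And>v. 0 < \<nu> v" and p: "1 \<le> p"
    and K: "0 < Km w \<nu> S m" "Km w \<nu> S m < top"
  shows "epowr (pnorm_pow \<nu> p (S (Suc m)) f) (1/p)
    \<le> epowr (1 / Km w \<nu> S m) (1/p) * epowr (grad_pnorm_pow w p (S m) (S (Suc m)) f) (1/p)
      + epowr (Dm w \<nu> S m / Km w \<nu> S m) (1/p) * epowr (pnorm_pow \<nu> p (S m) f) (1/p)"
proof -
  let ?A = "S m" and ?B = "S (Suc m)" and ?K = "Km w \<nu> S m" and ?D = "Dm w \<nu> S m"
  let ?G = "grad_pnorm_pow w p ?A ?B f"
  have tp: "0 < 1/p"
    using p by simp
  have "epowr (?K * pnorm_pow \<nu> p ?B f) (1/p)
      \<le> epowr (edge_sum w ?A ?B (\<lambda>u v. (\<bar>f u - f v\<bar> + \<bar>f u\<bar>) powr p)) (1/p)"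
  proof (intro epowr_mono[OF tp] order_trans[OF Km_mult_pnorm_pow_le_edge_sum[OF \<nu>_pos]] edge_sum_mono)
    show "\<bar>f v\<bar> powr p \<le> (\<bar>f u - f v\<bar> + \<bar>f u\<bar>) powr p" for u v
      using p by (intro powr_mono2) auto
  qed
  also have "\<dots> \<le> epowr ?G (1/p) + epowr (edge_sum w ?A ?B (\<lambda>u v. \<bar>f u\<bar> powr p)) (1/p)"
    unfolding edge_sum_def
    by (rule Minkowski_weighted_sum[where \<alpha> = "\<lambda>e. \<bar>f (fst e) - f (snd e)\<bar>" and \<beta> = "\<lambda>e. \<bar>f (fst e)\<bar>"])
       (simp_all add: p)
  also have "\<dots> \<le> epowr ?G (1/p) + epowr (?D * pnorm_pow \<nu> p ?A f) (1/p)"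
    by (intro add_left_mono epowr_mono[OF tp] edge_sum_le_Dm_mult_pnorm_pow w_sym \<nu>_pos)
  finally have scaled: "epowr (?K * pnorm_pow \<nu> p ?B f) (1/p)
      \<le> epowr ?G (1/p) + epowr (?D * pnorm_pow \<nu> p ?A f) (1/p)" .
  have "1 / ?K * ?K = 1"
    using K by (simp add: ennreal_divide_times)
  then have "epowr (pnorm_pow \<nu> p ?B f) (1/p) = epowr (1 / ?K) (1/p) * epowr (?K * pnorm_pow \<nu> p ?B f) (1/p)"
    by (simp add: epowr_mult[OF tp, symmetric] mult.assoc[symmetric])
  also have "\<dots> \<le> epowr (1 / ?K) (1/p) * (epowr ?G (1/p) + epowr (?D * pnorm_pow \<nu> p ?A f) (1/p))"
    using scaled by (rule mult_left_mono) simp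
  also have "\<dots> = epowr (1 / ?K) (1/p) * epowr ?G (1/p) + epowr (1 / ?K * (?D * pnorm_pow \<nu> p ?A f)) (1/p)"
    by (simp add: distrib_left epowr_mult[OF tp])
  also have "1 / ?K * (?D * pnorm_pow \<nu> p ?A f) = ?D / ?K * pnorm_pow \<nu> p ?A f"
    by (simp add: divide_ennreal_def mult_ac)
  also have "epowr (?D / ?K * pnorm_pow \<nu> p ?A f) (1/p) = epowr (?D / ?K) (1/p) * epowr (pnorm_pow \<nu> p ?A f) (1/p)"
    by (rule epowr_mult[OF tp])
  finally show ?thesis .
qed

section \<open>Unrolling the layer recursion\<close>

lemma linear_recursion_unroll:
  fixes \<phi> g a b :: "nat \<Rightarrow> ennreal"
  assumes "\<phi> 0 = 0"
    and step: "\<And>m. m < n \<Longrightarrow> \<phi> (Suc m) \<le> a m * g (Suc m) + b m * \<phi> m"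
  shows "m \<le> n \<Longrightarrow> \<phi> m \<le> (\<Sum>k=1..m. a (k - 1) * (\<Prod>i=k..<m. b i) * g k)"
proof (induction m)
  case 0
  then show ?case using assms(1) by simp
next
  case (Suc m)
  have "\<phi> (Suc m) \<le> a m * g (Suc m) + b m * \<phi> m"
    using Suc.prems by (intro step) simp
  also have "\<dots> \<le> a m * g (Suc m) + b m * (\<Sum>k=1..m. a (k - 1) * (\<Prod>i=k..<m. b i) * g k)"
    using Suc by (intro add_left_mono mult_left_mono) simp_all
  also have "b m * (\<Sum>k=1..m. a (k - 1) * (\<Prod>i=k..<m. b i) * g k)
      = (\<Sum>k=1..m. a (k - 1) * (\<Prod>i=k..<Suc m. b i) * g k)"
    unfolding sum_distrib_left by (intro sum.cong) (auto simp: prod.atLeastLessThan_Suc mult_ac)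
  also have "a m * g (Suc m) + \<dots> = (\<Sum>k=1..Suc m. a (k - 1) * (\<Prod>i=k..<Suc m. b i) * g k)"
    by (simp add: add.commute)
  finally show ?case .
qed

definition delta_coeff ::
    "('v \<Rightarrow> 'v \<Rightarrow> real) \<Rightarrow> ('v \<Rightarrow> real) \<Rightarrow> (nat \<Rightarrow> 'v set) \<Rightarrow> nat \<Rightarrow> nat \<Rightarrow> ennreal" where
  "delta_coeff w \<nu> S k m = 1 / Km w \<nu> S (k - 1) * (\<Prod>i=k..<m. Dm w \<nu> S i / Km w \<nu> S i)"

lemma layer_pnorm_le_sum_grad:
  fixes w :: "'v::countable \<Rightarrow> 'v \<Rightarrow> real"
  assumes w_nonneg: "\<And>u v. 0 \<le> w u v" and w_sym: "\<And>u v. w u v = w v u"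
    and \<nu>_pos: "\<And>v. 0 < \<nu> v"
    and K_pos: "\<And>m. m < n \<Longrightarrow> 0 < Km w \<nu> S m \<and> Km w \<nu> S m < top"
    and p: "1 \<le> p" and f0: "\<forall>v\<in>S 0. f v = 0" and "m \<le> n"
  shows "epowr (pnorm_pow \<nu> p (S m) f) (1/p)
    \<le> (\<Sum>k=1..m. epowr (delta_coeff w \<nu> S k m) (1/p) * epowr (grad_pnorm_pow w p (S (k - 1)) (S k) f) (1/p))"
proof -
  have tp: "0 < 1/p"
    using p by simp
  have "pnorm_pow \<nu> p (S 0) f = 0"
    using f0 by (simp add: pnorm_pow_def nn_integral_0_iff_AE AE_count_space indicator_def)
  then have "epowr (pnorm_pow \<nu> p (S m) f) (1/p)
    \<le> (\<Sum>k=1..m. epowr (1 / Km w \<nu> S (k - 1)) (1/p) * (\<Prod>i=k..<m. epowr (Dm w \<nu> S i / Km w \<nu> S i) (1/p))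
        * epowr (grad_pnorm_pow w p (S (k - 1)) (S k) f) (1/p))"
    using next_layer_pnorm_le[where w = w and \<nu> = \<nu>, OF w_nonneg w_sym \<nu>_pos p] K_pos \<open>m \<le> n\<close>
    by (intro linear_recursion_unroll[where \<phi> = "\<lambda>m. epowr (pnorm_pow \<nu> p (S m) f) (1/p)"]) simp_all
  also have "\<dots> = (\<Sum>k=1..m. epowr (delta_coeff w \<nu> S k m) (1/p) * epowr (grad_pnorm_pow w p (S (k - 1)) (S k) f) (1/p))"
    by (simp add: delta_coeff_def epowr_mult[OF tp] epowr_prod[OF tp])
  finally show ?thesis .
qed

section \<open>Summing over the layers\<close>

lemma sum_edge_sum_le:
  assumes "finite I" and "disjoint_family_on A I"
  shows "(\<Sum>k\<in>I. edge_sum w (A k) (B k) h) \<le> edge_sum w UNIV UNIV h"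
proof -
  have ind_le: "(\<Sum>k\<in>I. indicator (A k) u * indicator (B k) v) \<le> (1::ennreal)" for u v
  proof -
    have "(\<Sum>k\<in>I. indicator (A k) u * indicator (B k) v) \<le> (\<Sum>k\<in>I. indicator (A k) u :: ennreal)"
      by (intro sum_mono) (simp add: indicator_def)
    also have "\<dots> = indicator (\<Union>k\<in>I. A k) u"
      using assms by (simp add: indicator_UN_disjoint)
    also have "\<dots> \<le> 1"
      by (simp add: indicator_def)
    finally show ?thesis .
  qed
  have "(\<Sum>k\<in>I. indicator (A k) (fst e) * indicator (B k) (snd e) * ennreal (w (fst e) (snd e))
      * ennreal (h (fst e) (snd e))) \<le> ennreal (w (fst e) (snd e)) * ennreal (h (fst e) (snd e))" for e
    using mult_right_mono[OF ind_le[of "fst e" "snd e"], of "ennreal (w (fst e) (snd e)) * ennreal (h (fst e) (snd e))"]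
    by (simp add: sum_distrib_right mult.assoc)
  then show ?thesis
    unfolding edge_sum_def using \<open>finite I\<close>
    by (subst nn_integral_sum[symmetric]) (auto intro!: nn_integral_mono)
qed

lemma pnorm_pow_le_sum_layers:
  fixes S :: "nat \<Rightarrow> 'v set"
  assumes "(\<Union>m\<le>n. S m) = UNIV"
  shows "pnorm_pow \<nu> p (UNIV - S 0) f \<le> (\<Sum>m=1..n. pnorm_pow \<nu> p (S m) f)"
proof -
  have "indicator (UNIV - S 0) v \<le> (\<Sum>m=1..n. indicator (S m) v :: ennreal)" for v
  proof (cases "v \<in> S 0")
    case False
    from assms obtain m where "m \<le> n" "v \<in> S m"
      by blast
    with False have "m \<in> {1..n}"
      by (cases m) auto
    then have "indicator (S m) v \<le> (\<Sum>m=1..n. indicator (S m) v :: ennreal)"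
      by (intro member_le_sum) auto
    with \<open>v \<in> S m\<close> False show ?thesis
      by simp
  qed simp
  then show ?thesis
    unfolding pnorm_pow_def
    by (subst nn_integral_sum[symmetric])
       (auto intro!: nn_integral_mono mult_right_mono simp: sum_distrib_right[symmetric])
qed

lemma sum_layer_grad_pnorm_pow_le:
  fixes S :: "nat \<Rightarrow> 'v set"
  assumes S_disj: "\<And>i j. i \<le> n \<Longrightarrow> j \<le> n \<Longrightarrow> i \<noteq> j \<Longrightarrow> S i \<inter> S j = {}"
  shows "(\<Sum>k=1..n. grad_pnorm_pow w p (S (k - 1)) (S k) f) \<le> grad_pnorm_pow w p UNIV UNIV f"
proof (rule sum_edge_sum_le)
  show "disjoint_family_on (\<lambda>k. S (k - 1)) {1..n}"
    unfolding disjoint_family_on_def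
  proof (intro ballI impI)
    fix i j :: nat
    assume "i \<in> {1..n}" "j \<in> {1..n}" "i \<noteq> j"
    then show "S (i - 1) \<inter> S (j - 1) = {}"
      by (intro S_disj) auto
  qed
qed simp

lemma sum_triangle_swap:
  fixes X :: "nat \<Rightarrow> nat \<Rightarrow> 'a::comm_monoid_add"
  shows "(\<Sum>m=1..n. \<Sum>k=1..m. X m k) = (\<Sum>k=1..n. \<Sum>m=k..n. X m k)"
proof -
  have "(\<Sum>m=1..n. \<Sum>k=1..m. X m k) = (\<Sum>m\<in>{1..n}. \<Sum>k\<in>{k. k \<in> {1..n} \<and> k \<le> m}. X m k)"
    by (intro sum.cong) auto
  also have "\<dots> = (\<Sum>k\<in>{1..n}. \<Sum>m\<in>{m. m \<in> {1..n} \<and> k \<le> m}. X m k)"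
    by (rule sum.swap_restrict) simp_all
  also have "\<dots> = (\<Sum>k=1..n. \<Sum>m=k..n. X m k)"
    by (intro sum.cong) auto
  finally show ?thesis .
qed

lemma triangular_sum_le:
  fixes \<Phi> g :: "nat \<Rightarrow> ennreal" and c :: "nat \<Rightarrow> nat \<Rightarrow> ennreal"
  assumes bound: "\<And>m. m \<in> {1..n} \<Longrightarrow> \<Phi> m \<le> (\<Sum>k=1..m. c k m * g k)"
  shows "(\<Sum>m=1..n. \<Phi> m) \<le> (SUP k\<in>{1..n}. \<Sum>m=k..n. c k m) * (\<Sum>k=1..n. g k)"
proof -
  have "(\<Sum>m=1..n. \<Phi> m) \<le> (\<Sum>m=1..n. \<Sum>k=1..m. c k m * g k)"
    by (intro sum_mono bound)
  also have "\<dots> = (\<Sum>k=1..n. (\<Sum>m=k..n. c k m) * g k)"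
    by (subst sum_triangle_swap) (simp add: sum_distrib_right)
  also have "\<dots> \<le> (\<Sum>k=1..n. (SUP k\<in>{1..n}. \<Sum>m=k..n. c k m) * g k)"
    by (intro sum_mono mult_right_mono SUP_upper) simp_all
  also have "\<dots> = (SUP k\<in>{1..n}. \<Sum>m=k..n. c k m) * (\<Sum>k=1..n. g k)"
    by (simp add: sum_distrib_left)
  finally show ?thesis .
qed

lemma triangular_sum_le_Holder:
  fixes \<Phi> g :: "nat \<Rightarrow> ennreal" and c :: "nat \<Rightarrow> nat \<Rightarrow> ennreal"
  assumes pq: "p > 1" "q > 1" "1/p + 1/q = 1"
    and bound: "\<And>m. m \<in> {1..n} \<Longrightarrow> \<Phi> m \<le> (\<Sum>k=1..m. c k m * g k)"
  shows "epowr (\<Sum>m=1..n. epowr (\<Phi> m) p) (1/p)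
    \<le> epowr (\<Sum>m=1..n. epowr (\<Sum>k=1..m. epowr (c k m) q) (p/q)) (1/p)
      * epowr (\<Sum>k=1..n. epowr (g k) p) (1/p)"
proof -
  let ?G = "\<Sum>k=1..n. epowr (g k) p"
  let ?C = "\<lambda>m. \<Sum>k=1..m. epowr (c k m) q"
  have tp: "0 < p" "0 < 1/p"
    using pq by auto
  have row: "epowr (\<Phi> m) p \<le> epowr (?C m) (p/q) * ?G" if "m \<in> {1..n}" for m
  proof -
    have "\<Phi> m \<le> epowr (?C m) (1/q) * epowr (\<Sum>k=1..m. epowr (g k) p) (1/p)"
      using bound[OF that] Holder_inequality_sum_ennreal[OF _ pq] by (rule order_trans) simp
    also have "\<dots> \<le> epowr (?C m) (1/q) * epowr ?G (1/p)"
      using that by (intro mult_left_mono epowr_mono[OF tp(2)] sum_mono2) auto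
    finally have "epowr (\<Phi> m) p \<le> epowr (epowr (?C m) (1/q) * epowr ?G (1/p)) p"
      by (rule epowr_mono[OF tp(1)])
    also have "\<dots> = epowr (?C m) (p/q) * ?G"
      using tp by (simp add: epowr_mult epowr_epowr)
    finally show ?thesis .
  qed
  have "(\<Sum>m=1..n. epowr (\<Phi> m) p) \<le> (\<Sum>m=1..n. epowr (?C m) (p/q) * ?G)"
    by (rule sum_mono) (rule row)
  then have "epowr (\<Sum>m=1..n. epowr (\<Phi> m) p) (1/p) \<le> epowr ((\<Sum>m=1..n. epowr (?C m) (p/q)) * ?G) (1/p)"
    by (simp add: epowr_mono[OF tp(2)] sum_distrib_right)
  also have "\<dots> = epowr (\<Sum>m=1..n. epowr (?C m) (p/q)) (1/p) * epowr ?G (1/p)"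
    using tp by (simp add: epowr_mult)
  finally show ?thesis .
qed

lemma delta_one_eq_SUP:
  "delta w \<nu> S n 1 = (SUP k\<in>{1..n}. \<Sum>m=k..n. delta_coeff w \<nu> S k m)"
  by (simp add: delta_def delta_coeff_def Let_def sum_distrib_left)

lemma delta_eq_epowr_sum:
  assumes "p > 1" and "q = p / (p - 1)"
  shows "delta w \<nu> S n p
    = epowr (\<Sum>m=1..n. epowr (\<Sum>k=1..m. epowr (delta_coeff w \<nu> S k m) (q/p)) (p/q)) (1/p)"
proof -
  have "0 < q / p"
    using assms by simp
  then show ?thesis
    using assms by (simp add: delta_def delta_coeff_def Let_def epowr_mult)
qed

lemma pnorm_le_delta_grad_pnorm:
  fixes w :: "'v::countable \<Rightarrow> 'v \<Rightarrow> real" and S :: "nat \<Rightarrow> 'v set"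
  assumes w_nonneg: "\<And>u v. 0 \<le> w u v" and w_sym: "\<And>u v. w u v = w v u"
    and \<nu>_pos: "\<And>v. 0 < \<nu> v"
    and S_cover: "(\<Union>m\<le>n. S m) = UNIV"
    and S_disj: "\<And>i j. i \<le> n \<Longrightarrow> j \<le> n \<Longrightarrow> i \<noteq> j \<Longrightarrow> S i \<inter> S j = {}"
    and K_pos: "\<And>m. m < n \<Longrightarrow> 0 < Km w \<nu> S m \<and> Km w \<nu> S m < top"
    and p: "1 \<le> p" and f0: "\<forall>v\<in>S 0. f v = 0"
  shows "pnorm \<nu> p (UNIV - S 0) f \<le> delta w \<nu> S n p * grad_pnorm w p f"
proof -
  have tp: "0 < p" "0 < 1/p"
    using p by auto
  define \<Phi> where "\<Phi> m = epowr (pnorm_pow \<nu> p (S m) f) (1/p)" for m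
  define g where "g k = epowr (grad_pnorm_pow w p (S (k - 1)) (S k) f) (1/p)" for k
  define c where "c k m = epowr (delta_coeff w \<nu> S k m) (1/p)" for k m
  define T where "T = grad_pnorm_pow w p UNIV UNIV f"
  have \<Phi>_bound: "\<Phi> m \<le> (\<Sum>k=1..m. c k m * g k)" if "m \<in> {1..n}" for m
    unfolding \<Phi>_def c_def g_def
    by (rule layer_pnorm_le_sum_grad[OF w_nonneg w_sym \<nu>_pos K_pos p f0]) (use that in auto)
  have "(\<Sum>k=1..n. epowr (g k) p) = (\<Sum>k=1..n. grad_pnorm_pow w p (S (k - 1)) (S k) f)"
    using tp by (simp add: g_def epowr_epowr)
  also have "\<dots> \<le> T"
    unfolding T_def by (rule sum_layer_grad_pnorm_pow_le[OF S_disj])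
  finally have g_sum: "(\<Sum>k=1..n. epowr (g k) p) \<le> T" .
  have layers: "(\<Sum>m=1..n. epowr (\<Phi> m) p) = (\<Sum>m=1..n. pnorm_pow \<nu> p (S m) f)"
    using tp by (simp add: \<Phi>_def epowr_epowr)
  have lhs: "pnorm \<nu> p (UNIV - S 0) f \<le> epowr (\<Sum>m=1..n. epowr (\<Phi> m) p) (1/p)"
    unfolding pnorm_eq_epowr_pnorm_pow layers
    using tp by (intro epowr_mono pnorm_pow_le_sum_layers[OF S_cover])
  have grad: "grad_pnorm w p f = epowr T (1/p)"
    unfolding T_def by (rule grad_pnorm_eq_epowr_grad_pnorm_pow[OF w_nonneg])
  show ?thesis
  proof (cases "p = 1")
    case True
    have "pnorm \<nu> p (UNIV - S 0) f \<le> (\<Sum>m=1..n. \<Phi> m)"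
      using lhs True by simp
    also have "\<dots> \<le> (SUP k\<in>{1..n}. \<Sum>m=k..n. c k m) * (\<Sum>k=1..n. g k)"
      by (rule triangular_sum_le[OF \<Phi>_bound])
    also have "\<dots> \<le> delta w \<nu> S n p * grad_pnorm w p f"
      using g_sum True unfolding grad by (intro mult_mono) (simp_all add: c_def delta_one_eq_SUP)
    finally show ?thesis .
  next
    case False
    define q where "q = p / (p - 1)"
    have pq: "p > 1" "q > 1" "1/p + 1/q = 1"
      using p False unfolding q_def by (auto simp: field_simps)
    have "pnorm \<nu> p (UNIV - S 0) f
        \<le> epowr (\<Sum>m=1..n. epowr (\<Sum>k=1..m. epowr (c k m) q) (p/q)) (1/p)
          * epowr (\<Sum>k=1..n. epowr (g k) p) (1/p)"
      using lhs triangular_sum_le_Holder[OF pq \<Phi>_bound] by (rule order_trans)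
    also have "\<dots> \<le> delta w \<nu> S n p * grad_pnorm w p f"
      unfolding grad delta_eq_epowr_sum[OF pq(1) q_def]
      using tp by (intro mult_mono epowr_mono[OF tp(2) g_sum]) (simp_all add: c_def epowr_epowr)
    finally show ?thesis .
  qed
qed

section \<open>The supremum norm\<close>

lemma abs_le_layer_index_mult_grad_sup_norm:
  assumes K_pos: "\<And>m. m < n \<Longrightarrow> 0 < Km w \<nu> S m" and f0: "\<forall>v\<in>S 0. f v = 0"
  shows "m \<le> n \<Longrightarrow> v \<in> S m \<Longrightarrow> ennreal \<bar>f v\<bar> \<le> of_nat m * grad_sup_norm w f"
proof (induction m arbitrary: v)
  case 0
  then show ?case using f0 by simp
next
  case (Suc m)
  have "0 < Km w \<nu> S m"
    using K_pos Suc.prems by simp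
  also have "Km w \<nu> S m \<le> wA w (S m) v / ennreal (\<nu> v)"
    unfolding Km_def using Suc.prems by (intro INF_lower) auto
  finally have "wA w (S m) v \<noteq> 0"
    by auto
  then obtain u where u: "u \<in> S m" "w u v > 0"
    unfolding wA_def by (metis (mono_tags, lifting) infsum_0 ennreal_eq_0_iff not_le)
  have "ennreal \<bar>f v\<bar> \<le> ennreal \<bar>f u\<bar> + ennreal \<bar>f u - f v\<bar>"
    by (simp add: ennreal_plus[symmetric] del: ennreal_plus)
  also have "\<dots> \<le> of_nat m * grad_sup_norm w f + grad_sup_norm w f"
  proof (rule add_mono)
    show "ennreal \<bar>f u\<bar> \<le> of_nat m * grad_sup_norm w f"
      using Suc u by simp
    show "ennreal \<bar>f u - f v\<bar> \<le> grad_sup_norm w f"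
      unfolding grad_sup_norm_def using u by (intro SUP_upper2[of "(u, v)"]) auto
  qed
  also have "\<dots> = of_nat (Suc m) * grad_sup_norm w f"
    by (simp add: distrib_right)
  finally show ?case .
qed

lemma sup_norm_le_grad_sup_norm:
  fixes S :: "nat \<Rightarrow> 'v set"
  assumes S_cover: "(\<Union>m\<le>n. S m) = UNIV"
    and K_pos: "\<And>m. m < n \<Longrightarrow> 0 < Km w \<nu> S m" and f0: "\<forall>v\<in>S 0. f v = 0"
  shows "sup_norm (UNIV - S 0) f \<le> of_nat n * grad_sup_norm w f"
  unfolding sup_norm_def
proof (rule SUP_least)
  fix v
  from S_cover obtain m where "m \<le> n" "v \<in> S m"
    by blast
  then have "ennreal \<bar>f v\<bar> \<le> of_nat m * grad_sup_norm w f"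
    using abs_le_layer_index_mult_grad_sup_norm[OF K_pos f0] by blast
  also have "\<dots> \<le> of_nat n * grad_sup_norm w f"
    using \<open>m \<le> n\<close> by (intro mult_right_mono) auto
  finally show "ennreal \<bar>f v\<bar> \<le> of_nat n * grad_sup_norm w f" .
qed

theorem corollary1p5:
  fixes w :: "'v::countable \<Rightarrow> 'v \<Rightarrow> real" and \<nu> :: "'v \<Rightarrow> real"
    and S :: "nat \<Rightarrow> 'v set" and n :: nat
  assumes w_nonneg: "\<And>u v. 0 \<le> w u v"
    and w_sym: "\<And>u v. w u v = w v u"
    and w_diag: "\<And>u. w u u = 0"
    and \<nu>_pos: "\<And>v. 0 < \<nu> v"
    and S_cover: "(\<Union>m\<le>n. S m) = UNIV"
    and S_disj: "\<And>i j. i \<le> n \<Longrightarrow> j \<le> n \<Longrightarrow> i \<noteq> j \<Longrightarrow> S i \<inter> S j = {}"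
    and K_pos: "\<And>m. m < n \<Longrightarrow> 0 < Km w \<nu> S m \<and> Km w \<nu> S m < top"
  shows "(\<forall>p f. 1 \<le> p \<longrightarrow> pnorm \<nu> p UNIV f < top \<longrightarrow> (\<forall>v\<in>S 0. f v = 0) \<longrightarrow>
            pnorm \<nu> p (UNIV - S 0) f \<le> delta w \<nu> S n p * grad_pnorm w p f)
       \<and> (\<forall>f. bounded (range f) \<longrightarrow> (\<forall>v\<in>S 0. f v = 0) \<longrightarrow>
            sup_norm (UNIV - S 0) f \<le> of_nat n * grad_sup_norm w f)"
  using pnorm_le_delta_grad_pnorm[OF w_nonneg w_sym \<nu>_pos S_cover S_disj K_pos]
    sup_norm_le_grad_sup_norm[OF S_cover] K_pos
  by blast

end
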